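(* For every $\to$-formula $H$, $\mathbf{CL7}\vdash H$ if and only if $H$ is a substitutional instance of a binary tautology of classical propositional logic.
   Context: Formulas ("$\to$-formulas") are built from infinitely many propositional atoms using only the binary connective $\to$. A $\to$-sequent is a pair $\Gamma\Rightarrow F$ where $\Gamma$ is a finite multiset of $\to$-formulas and $F$ is a $\to$-formula. The system $\mathbf{CL7}$ has as axioms all sequents of the form $\Gamma, F\Rightarrow F$ and exactly two inference rules: Right $\to$: from $\Gamma,E\Rightarrow F$ infer $\Gamma\Rightarrow E\to F$; Left $\to$: from $\Gamma,F\Rightarrow G$ and $\Delta\Rightarrow E$ infer $\Gamma,\Delta,E\to F\Rightarrow G$. (There is no contraction rule; this is the implicative fragment of affine logic.) A formula $H$ is provable in $\mathbf{CL7}$ iff the sequent $\Rightarrow H$ (empty antecedent) is derivable. A formula of classical propositional logic is binary if no atom occurs in it more than twice; a tautology is a classically valid formula. A substitutional instance of $F$ is the result of replacing atoms of $F$ by arbitrary formulas, with all occurrences of the same atom replaced by the same formula. *)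

theory Defs
  imports Main "HOL-Library.Multiset"
begin

datatype fm = Atom nat | Imp fm fm (infixr "\<^bold>\<rightarrow>" 55)

text \<open>The sequent calculus CL7 (affine implicational logic), antecedents are multisets.\<close>
inductive CL7 :: "fm multiset \<Rightarrow> fm \<Rightarrow> bool" where
  Ax: "CL7 (add_mset F \<Gamma>) F"
| ImpR: "CL7 (add_mset E \<Gamma>) F \<Longrightarrow> CL7 \<Gamma> (E \<^bold>\<rightarrow> F)"
| ImpL: "CL7 (add_mset F \<Gamma>) G \<Longrightarrow> CL7 \<Delta> E \<Longrightarrow> CL7 (add_mset (E \<^bold>\<rightarrow> F) (\<Gamma> + \<Delta>)) G"

definition provable_CL7 :: "fm \<Rightarrow> bool" where
  "provable_CL7 H \<longleftrightarrow> CL7 {#} H"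

fun eval :: "(nat \<Rightarrow> bool) \<Rightarrow> fm \<Rightarrow> bool" where
  "eval v (Atom p) = v p"
| "eval v (A \<^bold>\<rightarrow> B) = (eval v A \<longrightarrow> eval v B)"

definition tautology :: "fm \<Rightarrow> bool" where
  "tautology F \<longleftrightarrow> (\<forall>v. eval v F)"

fun atom_occs :: "fm \<Rightarrow> nat multiset" where
  "atom_occs (Atom p) = {#p#}"
| "atom_occs (A \<^bold>\<rightarrow> B) = atom_occs A + atom_occs B"

definition binary :: "fm \<Rightarrow> bool" where
  "binary F \<longleftrightarrow> (\<forall>p. count (atom_occs F) p \<le> 2)"

fun subst :: "(nat \<Rightarrow> fm) \<Rightarrow> fm \<Rightarrow> fm" where
  "subst \<sigma> (Atom p) = \<sigma> p"
| "subst \<sigma> (A \<^bold>\<rightarrow> B) = subst \<sigma> A \<^bold>\<rightarrow> subst \<sigma> B"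

definition subst_instance :: "fm \<Rightarrow> fm \<Rightarrow> bool" where
  "subst_instance H F \<longleftrightarrow> (\<exists>\<sigma>. H = subst \<sigma> F)"

end

theory Submission
  imports Defs
begin

(*
  A sequent is binary when no atom occurs in it more than twice.  The theorem
  follows from two facts about sequents, with the empty antecedent as special case.

  (1) Generalisation: every CL7-derivable sequent is a substitution instance of a
      derivable binary sequent.  By induction on derivations; in the two-premise
      rule the generic premises are made atom-disjoint by renaming their atoms into
      the even and odd numbers, and the two substitutions are interleaved.
      Together with soundness of CL7 this gives the direction "provable ==> instance
      of a binary tautology".

  (2) Completeness for binary sequents: a classically valid binary sequent is
      CL7-derivable.  For an atomic
      succedent p that is not an axiom, validity yields an antecedent formula
      A --> C with head p, and binarity shows that p occurs nowhere else.  Hence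
      the rest of the antecedent entails A, and C with the rest entails p.  The
      minimal sub-multisets doing so are disjoint (again by binarity), so an
      application of Left --> to both subsequents followed by weakening derives
      the sequent.  Closure of CL7 under substitution then gives the converse
      direction of the theorem.
*)

definition occs :: "fm multiset \<Rightarrow> nat multiset" where
  "occs \<Gamma> = (\<Sum>G\<in>#\<Gamma>. atom_occs G)"

lemma occs_simps [simp]:
  "occs {#} = {#}"
  "occs (add_mset G \<Gamma>) = atom_occs G + occs \<Gamma>"
  "occs (\<Gamma> + \<Delta>) = occs \<Gamma> + occs \<Delta>"
  by (auto simp: occs_def)

lemma occs_mono: "\<Gamma> \<subseteq># \<Delta> \<Longrightarrow> occs \<Gamma> \<subseteq># occs \<Delta>"
  unfolding occs_def by (rule sum_mset_image_mset_mono_strong) auto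

lemma occs_mem: "G \<in># \<Gamma> \<Longrightarrow> a \<in># atom_occs G \<Longrightarrow> a \<in># occs \<Gamma>"
  by (auto dest!: multi_member_split)

definition at_most_twice :: "nat multiset \<Rightarrow> bool" where
  "at_most_twice M \<longleftrightarrow> (\<forall>a. count M a \<le> 2)"

definition binary_seq :: "fm multiset \<Rightarrow> fm \<Rightarrow> bool" where
  "binary_seq \<Gamma> X \<longleftrightarrow> at_most_twice (occs \<Gamma> + atom_occs X)"

lemma binary_seq_empty: "binary_seq {#} F \<longleftrightarrow> binary F"
  by (simp add: binary_seq_def at_most_twice_def binary_def)

lemma at_most_twice_mono: "M \<subseteq># N \<Longrightarrow> at_most_twice N \<Longrightarrow> at_most_twice M"
  unfolding at_most_twice_def by (meson mset_subset_eq_count order_trans)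

lemma binary_seq_sub:
  "binary_seq \<Gamma> X \<Longrightarrow> occs \<Gamma>' + atom_occs X' \<subseteq># occs \<Gamma> + atom_occs X \<Longrightarrow> binary_seq \<Gamma>' X'"
  unfolding binary_seq_def by (rule at_most_twice_mono)

text \<open>The counting principle behind all uses of binarity: no atom can be found in
  three disjoint parts of an at-most-twice multiset.\<close>
lemma at_most_twice_three:
  assumes "at_most_twice N" "P + Q + R \<subseteq># N" "a \<in># P" "a \<in># Q" "a \<in># R"
  shows False
proof -
  have "count (P + Q + R) a \<le> 2"
    using assms(1,2) unfolding at_most_twice_def by (meson mset_subset_eq_count order_trans)
  moreover have "0 < count P a" "0 < count Q a" "0 < count R a"
    using assms(3-5) by simp_all
  ultimately show False by simp
qed

definition entails :: "fm multiset \<Rightarrow> fm \<Rightarrow> bool" where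
  "entails \<Gamma> X \<longleftrightarrow> (\<forall>v. (\<forall>G\<in>#\<Gamma>. eval v G) \<longrightarrow> eval v X)"

lemma entails_empty: "entails {#} F \<longleftrightarrow> tautology F"
  by (simp add: entails_def tautology_def)

fun head :: "fm \<Rightarrow> nat" where
  "head (Atom p) = p"
| "head (A \<^bold>\<rightarrow> B) = head B"

lemma head_in_atom_occs: "head F \<in># atom_occs F"
  by (induction F) auto

lemma eval_head: "v (head F) \<Longrightarrow> eval v F"
  by (induction F) auto

lemma eval_cong: "(\<And>a. a \<in># atom_occs F \<Longrightarrow> v a = w a) \<Longrightarrow> eval v F = eval w F"
  by (induction F) auto

lemma CL7_sound: "CL7 \<Gamma> X \<Longrightarrow> entails \<Gamma> X"
  by (induction rule: CL7.induct) (auto simp: entails_def)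

lemma CL7_subst: "CL7 \<Gamma> X \<Longrightarrow> CL7 (image_mset (subst \<sigma>) \<Gamma>) (subst \<sigma> X)"
proof (induction rule: CL7.induct)
  case (ImpL F \<Gamma> G \<Delta> E)
  then show ?case using CL7.ImpL[of "subst \<sigma> F"] by simp
qed (simp_all add: CL7.Ax CL7.ImpR)

lemma CL7_weaken: "CL7 \<Gamma> X \<Longrightarrow> CL7 (\<Gamma> + \<Theta>) X"
proof (induction rule: CL7.induct)
  case (ImpL F \<Gamma> G \<Delta> E)
  have "CL7 (add_mset F (\<Gamma> + \<Theta>)) G" using ImpL(3) by simp
  from CL7.ImpL[OF this ImpL(2)] show ?case by (simp add: ac_simps)
qed (simp_all add: CL7.Ax CL7.ImpR)

section \<open>Every derivable sequent is an instance of a derivable binary sequent\<close>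

definition rename :: "(nat \<Rightarrow> nat) \<Rightarrow> fm \<Rightarrow> fm" where
  "rename f = subst (\<lambda>n. Atom (f n))"

definition interleave :: "(nat \<Rightarrow> fm) \<Rightarrow> (nat \<Rightarrow> fm) \<Rightarrow> nat \<Rightarrow> fm" where
  "interleave \<sigma>1 \<sigma>2 n = (if even n then \<sigma>1 (n div 2) else \<sigma>2 (n div 2))"

abbreviation evens :: "fm \<Rightarrow> fm" where "evens \<equiv> rename (\<lambda>n. 2 * n)"
abbreviation odds :: "fm \<Rightarrow> fm" where "odds \<equiv> rename (\<lambda>n. Suc (2 * n))"

lemma subst_interleave_evens: "subst (interleave \<sigma>1 \<sigma>2) (evens A) = subst \<sigma>1 A"
  by (induction A) (simp_all add: rename_def interleave_def)

lemma subst_interleave_odds: "subst (interleave \<sigma>1 \<sigma>2) (odds A) = subst \<sigma>2 A"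
  by (induction A) (simp_all add: rename_def interleave_def)

lemma atom_occs_rename: "atom_occs (rename f A) = image_mset f (atom_occs A)"
  by (induction A) (simp_all add: rename_def)

lemma occs_rename: "occs (image_mset (rename f) \<Gamma>) = image_mset f (occs \<Gamma>)"
  by (induction \<Gamma>) (simp_all add: atom_occs_rename)

lemma count_image_mset_inj: "inj f \<Longrightarrow> count (image_mset f M) (f x) = count M x"
  by (induction M) (auto dest: injD)

lemma at_most_twice_interleave:
  assumes "at_most_twice M" "at_most_twice N"
  shows "at_most_twice (image_mset (\<lambda>n. 2 * n) M + image_mset (\<lambda>n. Suc (2 * n)) N)"
  unfolding at_most_twice_def
proof
  fix a :: nat
  have inj: "inj (\<lambda>n::nat. 2 * n)" "inj (\<lambda>n::nat. Suc (2 * n))" by (auto intro: injI)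
  show "count (image_mset (\<lambda>n. 2 * n) M + image_mset (\<lambda>n. Suc (2 * n)) N) a \<le> 2"
  proof (cases "even a")
    case True
    then obtain k where a: "a = 2 * k" by blast
    then have "count (image_mset (\<lambda>n. 2 * n) M) a = count M k"
      using count_image_mset_inj[OF inj(1)] by simp
    moreover have "count (image_mset (\<lambda>n. Suc (2 * n)) N) a = 0"
      using a by (auto simp: count_eq_zero_iff; presburger)
    ultimately show ?thesis using assms(1) by (simp add: at_most_twice_def)
  next
    case False
    then obtain k where a: "a = Suc (2 * k)" using oddE by fastforce
    then have "count (image_mset (\<lambda>n. Suc (2 * n)) N) a = count N k"
      using count_image_mset_inj[OF inj(2)] by simp
    moreover have "count (image_mset (\<lambda>n. 2 * n) M) a = 0"
      using a by (auto simp: count_eq_zero_iff; presburger)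
    ultimately show ?thesis using assms(2) by (simp add: at_most_twice_def)
  qed
qed

definition binary_generalisable :: "fm multiset \<Rightarrow> fm \<Rightarrow> bool" where
  "binary_generalisable \<Gamma> X \<longleftrightarrow>
     (\<exists>\<Gamma>' X' \<sigma>. CL7 \<Gamma>' X' \<and> binary_seq \<Gamma>' X' \<and>
        image_mset (subst \<sigma>) \<Gamma>' = \<Gamma> \<and> subst \<sigma> X' = X)"

lemma generalisable_identity: "binary_generalisable {#F#} F"
proof -
  have "CL7 {#Atom 0#} (Atom 0)" using CL7.Ax[of "Atom 0" "{#}"] by simp
  moreover have "binary_seq {#Atom 0#} (Atom 0)"
    by (simp add: binary_seq_def at_most_twice_def)
  ultimately show ?thesis
    unfolding binary_generalisable_def by (intro exI[of _ "{#Atom 0#}"] exI[of _ "Atom 0"]) auto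
qed

text \<open>Weakening: the new antecedent formula is generalised to a fresh odd atom.\<close>
lemma generalisable_weaken:
  assumes "binary_generalisable \<Gamma> X"
  shows "binary_generalisable (add_mset G \<Gamma>) X"
proof -
  obtain \<Gamma>1 X1 \<sigma> where g: "CL7 \<Gamma>1 X1" "binary_seq \<Gamma>1 X1"
    "image_mset (subst \<sigma>) \<Gamma>1 = \<Gamma>" "subst \<sigma> X1 = X"
    using assms unfolding binary_generalisable_def by blast
  define \<Gamma>' where "\<Gamma>' = add_mset (odds (Atom 0)) (image_mset evens \<Gamma>1)"
  define \<tau> where "\<tau> = interleave \<sigma> (\<lambda>_. G)"
  have "CL7 (image_mset evens \<Gamma>1 + {#odds (Atom 0)#}) (evens X1)"
    using CL7_weaken[OF CL7_subst[OF g(1)]] unfolding rename_def by blast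
  then have "CL7 \<Gamma>' (evens X1)" by (simp add: \<Gamma>'_def)
  moreover have "binary_seq \<Gamma>' (evens X1)"
    using at_most_twice_interleave[of "occs \<Gamma>1 + atom_occs X1" "{#0#}"] g(2)
    by (simp add: binary_seq_def \<Gamma>'_def occs_rename atom_occs_rename at_most_twice_def ac_simps)
  moreover have "image_mset (subst \<tau>) \<Gamma>' = add_mset G \<Gamma>" "subst \<tau> (evens X1) = X"
    using g(3,4) by (simp_all add: \<Gamma>'_def \<tau>_def subst_interleave_evens subst_interleave_odds
        image_mset.compositionality comp_def)
  ultimately show ?thesis unfolding binary_generalisable_def by blast
qed

lemma generalisable_ImpR:
  assumes "binary_generalisable (add_mset E \<Gamma>) F"
  shows "binary_generalisable \<Gamma> (E \<^bold>\<rightarrow> F)"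
proof -
  obtain \<Gamma>1 X1 \<sigma> where g: "CL7 \<Gamma>1 X1" "binary_seq \<Gamma>1 X1"
    "image_mset (subst \<sigma>) \<Gamma>1 = add_mset E \<Gamma>" "subst \<sigma> X1 = F"
    using assms unfolding binary_generalisable_def by blast
  obtain M1 E1 where m: "\<Gamma>1 = add_mset E1 M1" "subst \<sigma> E1 = E" "image_mset (subst \<sigma>) M1 = \<Gamma>"
    using msed_map_invR[OF g(3)] by blast
  have "CL7 M1 (E1 \<^bold>\<rightarrow> X1)" using g(1) m(1) CL7.ImpR by simp
  moreover have "binary_seq M1 (E1 \<^bold>\<rightarrow> X1)"
    using g(2) m(1) by (simp add: binary_seq_def ac_simps)
  ultimately show ?thesis
    using g(4) m(2,3) unfolding binary_generalisable_def by fastforce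
qed

text \<open>Left \<open>\<rightarrow>\<close>: the generic premises are renamed apart into even and odd atoms.\<close>
lemma generalisable_ImpL:
  assumes "binary_generalisable (add_mset F \<Gamma>) G" "binary_generalisable \<Delta> E"
  shows "binary_generalisable (add_mset (E \<^bold>\<rightarrow> F) (\<Gamma> + \<Delta>)) G"
proof -
  obtain \<Gamma>1 X1 \<sigma>1 where g1: "CL7 \<Gamma>1 X1" "binary_seq \<Gamma>1 X1"
    "image_mset (subst \<sigma>1) \<Gamma>1 = add_mset F \<Gamma>" "subst \<sigma>1 X1 = G"
    using assms(1) unfolding binary_generalisable_def by blast
  obtain M1 F1 where m: "\<Gamma>1 = add_mset F1 M1" "subst \<sigma>1 F1 = F" "image_mset (subst \<sigma>1) M1 = \<Gamma>"
    using msed_map_invR[OF g1(3)] by blast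
  obtain \<Delta>2 E2 \<sigma>2 where g2: "CL7 \<Delta>2 E2" "binary_seq \<Delta>2 E2"
    "image_mset (subst \<sigma>2) \<Delta>2 = \<Delta>" "subst \<sigma>2 E2 = E"
    using assms(2) unfolding binary_generalisable_def by blast
  define \<Gamma>' where "\<Gamma>' = add_mset (odds E2 \<^bold>\<rightarrow> evens F1) (image_mset evens M1 + image_mset odds \<Delta>2)"
  define \<tau> where "\<tau> = interleave \<sigma>1 \<sigma>2"
  have "CL7 (add_mset (evens F1) (image_mset evens M1)) (evens X1)"
    using CL7_subst[OF g1(1)] m(1) unfolding rename_def by simp
  from CL7.ImpL[OF this CL7_subst[OF g2(1)]] have "CL7 \<Gamma>' (evens X1)"
    unfolding \<Gamma>'_def rename_def .
  moreover have "binary_seq \<Gamma>' (evens X1)"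
    using at_most_twice_interleave[of "occs \<Gamma>1 + atom_occs X1" "occs \<Delta>2 + atom_occs E2"] g1(2) g2(2)
    by (simp add: binary_seq_def \<Gamma>'_def m(1) occs_rename atom_occs_rename ac_simps)
  moreover have "image_mset (subst \<tau>) \<Gamma>' = add_mset (E \<^bold>\<rightarrow> F) (\<Gamma> + \<Delta>)" "subst \<tau> (evens X1) = G"
    using g1(4) g2(3,4) m(2,3) by (simp_all add: \<Gamma>'_def \<tau>_def subst_interleave_evens
        subst_interleave_odds image_mset.compositionality comp_def)
  ultimately show ?thesis unfolding binary_generalisable_def by blast
qed

theorem derivable_generalisable: "CL7 \<Gamma> X \<Longrightarrow> binary_generalisable \<Gamma> X"
proof (induction rule: CL7.induct)
  case (Ax F \<Gamma>)
  show ?case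
  proof (induction \<Gamma>)
    case empty
    show ?case using generalisable_identity by simp
  next
    case (add G \<Gamma>)
    then show ?case using generalisable_weaken[of "add_mset F \<Gamma>" F G] by (simp add: add_mset_commute)
  qed
qed (simp_all add: generalisable_ImpR generalisable_ImpL)

section \<open>Completeness for binary sequents\<close>

lemma exists_minimal_submultiset:
  assumes "P M"
  obtains N where "N \<subseteq># M" "P N" "\<And>N'. N' \<subset># N \<Longrightarrow> \<not> P N'"
proof -
  let ?Q = "{N. N \<subseteq># M \<and> P N}"
  have "M \<in> ?Q" using assms by simp
  from wfp_subset_mset[unfolded wfp_eq_minimal, rule_format, OF this]
  obtain N where N: "N \<subseteq># M" "P N" and min: "\<And>N'. N' \<subset># N \<Longrightarrow> N' \<notin> ?Q"
    by auto
  show ?thesis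
  proof (rule that[OF N])
    fix N' assume "N' \<subset># N"
    moreover have "N' \<subseteq># M"
      using subset_mset.order_trans[OF subset_mset.less_imp_le[OF \<open>N' \<subset># N\<close>] N(1)] .
    ultimately show "\<not> P N'" using min by blast
  qed
qed

text \<open>Otherwise making all heads of \<open>K\<close> true would turn a countermodel for the sequent
  without \<open>K\<close> into one for the whole sequent.\<close>
lemma minimal_support_heads:
  assumes ent: "entails (\<Theta> + \<Delta>) X"
    and min: "\<And>\<Delta>'. \<Delta>' \<subset># \<Delta> \<Longrightarrow> \<not> entails (\<Theta> + \<Delta>') X"
    and K: "K \<subseteq># \<Delta>" "K \<noteq> {#}"
  shows "\<exists>D\<in>#K. head D \<in># occs (\<Theta> + (\<Delta> - K)) + atom_occs X"
proof (rule ccontr)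
  assume no_escape: "\<not> ?thesis"
  have split: "\<Delta> = K + (\<Delta> - K)" using K(1) by simp
  then have "\<Delta> - K \<noteq> \<Delta>" using K(2) by (metis add_cancel_left_left)
  then have "\<Delta> - K \<subset># \<Delta>" by (simp add: subset_mset.less_le)
  then obtain v where v: "\<forall>G\<in>#\<Theta> + (\<Delta> - K). eval v G" "\<not> eval v X"
    using min unfolding entails_def by blast
  define S where "S = head ` set_mset K"
  define w where "w a = (a \<in> S \<or> v a)" for a
  have unchanged: "eval w G = eval v G" if "\<And>a. a \<in># atom_occs G \<Longrightarrow> a \<notin> S" for G
    using that by (intro eval_cong) (auto simp: w_def)
  have "eval w G" if "G \<in># \<Theta> + (\<Delta> - K)" for G
  proof -
    have "a \<notin> S" if "a \<in># atom_occs G" for a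
      using occs_mem[OF \<open>G \<in># \<Theta> + (\<Delta> - K)\<close> that] no_escape by (auto simp: S_def)
    then show ?thesis using unchanged v(1) that by blast
  qed
  moreover have "eval w G" if "G \<in># K" for G
    using that by (intro eval_head) (simp add: w_def S_def)
  ultimately have "\<forall>G\<in>#\<Theta> + \<Delta>. eval w G" by (subst split) auto
  moreover have "\<not> eval w X"
    using unchanged v(2) no_escape by (auto simp: S_def)
  ultimately show False using ent unfolding entails_def by blast
qed

lemma add_mset_differences_subset:
  assumes "D \<in># \<Delta>1 \<inter># \<Delta>2" "\<Delta>1 \<subseteq># \<Delta>" "\<Delta>2 \<subseteq># \<Delta>"
  shows "add_mset D ((\<Delta>1 - \<Delta>1 \<inter># \<Delta>2) + (\<Delta>2 - \<Delta>1 \<inter># \<Delta>2)) \<subseteq># \<Delta>"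
  unfolding subseteq_mset_def
proof
  fix x
  have "count \<Delta>1 x \<le> count \<Delta> x" "count \<Delta>2 x \<le> count \<Delta> x"
    using assms(2,3) by (auto simp: subseteq_mset_def)
  moreover have "1 \<le> count \<Delta>1 D" "1 \<le> count \<Delta>2 D"
    using assms(1) by (auto simp: Suc_le_eq)
  ultimately show "count (add_mset D ((\<Delta>1 - \<Delta>1 \<inter># \<Delta>2) + (\<Delta>2 - \<Delta>1 \<inter># \<Delta>2))) x \<le> count \<Delta> x"
    by (cases "x = D"; simp; linarith)
qed

lemma add_mset_nested_differences_subset:
  assumes "D \<in># K" "K \<subseteq># I" "I \<subseteq># J"
  shows "add_mset D ((I - K) + (J - I)) \<subseteq># J"
  unfolding subseteq_mset_def
proof
  fix x
  have "count K x \<le> count I x" "count I x \<le> count J x"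
    using assms(2,3) by (auto simp: subseteq_mset_def)
  moreover have "1 \<le> count K D" using assms(1) by (simp add: Suc_le_eq)
  ultimately show "count (add_mset D ((I - K) + (J - I))) x \<le> count J x"
    by (cases "x = D"; simp; linarith)
qed

text \<open>Applying the previous lemma on both sides to a suitable part \<open>K\<close> of
  the common part \<open>I\<close> produces an atom occurring three times.\<close>
lemma minimal_supports_disjoint:
  assumes bin: "at_most_twice (occs \<Delta> + (occs \<Theta>1 + atom_occs X1 + occs \<Theta>2 + atom_occs X2))"
    and D1: "\<Delta>1 \<subseteq># \<Delta>" "entails (\<Theta>1 + \<Delta>1) X1" "\<And>N. N \<subset># \<Delta>1 \<Longrightarrow> \<not> entails (\<Theta>1 + N) X1"
    and D2: "\<Delta>2 \<subseteq># \<Delta>" "entails (\<Theta>2 + \<Delta>2) X2" "\<And>N. N \<subset># \<Delta>2 \<Longrightarrow> \<not> entails (\<Theta>2 + N) X2"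
  shows "\<Delta>1 \<inter># \<Delta>2 = {#}"
proof (rule ccontr)
  define rest where "rest = occs \<Theta>1 + atom_occs X1 + occs \<Theta>2 + atom_occs X2"
  text \<open>The head of a member \<open>D\<close> of \<open>\<Delta>\<close> cannot occur in two further disjoint parts
    of the sequent, since together with its occurrence in \<open>D\<close> this makes three.\<close>
  have three: False
    if "add_mset D (S1 + S2) \<subseteq># \<Delta>" "head D \<in># occs S1 + Q1" "head D \<in># occs S2 + Q2"
       "Q1 + Q2 \<subseteq># rest" for D S1 S2 Q1 Q2
  proof -
    have "atom_occs D + (occs S1 + Q1) + (occs S2 + Q2) = occs (add_mset D (S1 + S2)) + (Q1 + Q2)"
      by (simp add: ac_simps)
    also have "\<dots> \<subseteq># occs \<Delta> + rest"
      using occs_mono[OF that(1)] that(4) by (rule subset_mset.add_mono)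
    finally show False
      using at_most_twice_three[OF bin[folded rest_def] _ head_in_atom_occs that(2,3)] by blast
  qed
  define I where "I = \<Delta>1 \<inter># \<Delta>2"
  assume "\<Delta>1 \<inter># \<Delta>2 \<noteq> {#}"
  then have I: "I \<noteq> {#}" "I \<subseteq># \<Delta>1" "I \<subseteq># \<Delta>2" by (auto simp: I_def)
  define out1 where "out1 = occs (\<Theta>1 + (\<Delta>1 - I)) + atom_occs X1"
  define K where "K = filter_mset (\<lambda>D. head D \<in># out1) I"
  have "K \<noteq> {#}"
    using minimal_support_heads[OF D1(2,3) I(2,1)] by (auto simp: K_def out1_def)
  moreover have KI: "K \<subseteq># I" by (simp add: K_def)
  moreover have "K \<subseteq># \<Delta>2" using KI I(3) by (rule subset_mset.order_trans)
  ultimately obtain D where D: "D \<in># K" "head D \<in># occs (\<Theta>2 + (\<Delta>2 - K)) + atom_occs X2"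
    using minimal_support_heads[OF D2(2,3)] by blast
  have out1: "head D \<in># occs (\<Delta>1 - I) + (occs \<Theta>1 + atom_occs X1)"
    using D(1) by (simp add: K_def out1_def ac_simps)
  have "\<Delta>2 - K = (\<Delta>2 - I) + (I - K)"
    using KI I(3) by (simp add: multiset_eq_iff subseteq_mset_def)
  then consider "head D \<in># occs (\<Delta>2 - I) + (occs \<Theta>2 + atom_occs X2)" | "head D \<in># occs (I - K)"
    using D(2) by (auto simp: ac_simps)
  then show False
  proof cases
    case 1
    have "D \<in># \<Delta>1 \<inter># \<Delta>2" using KI D(1) unfolding I_def by (rule mset_subset_eqD)
    from add_mset_differences_subset[OF this D1(1) D2(1), folded I_def]
    show False by (rule three[OF _ out1 1]) (simp add: rest_def ac_simps)
  next
    case 2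
    have sub: "add_mset D ((I - K) + (\<Delta>1 - I)) \<subseteq># \<Delta>"
      using add_mset_nested_differences_subset[OF D(1) KI I(2)] D1(1)
      by (rule subset_mset.order_trans)
    from 2 have "head D \<in># occs (I - K) + {#}" by simp
    from three[OF sub this out1] show False by (simp add: rest_def)
  qed
qed

text \<open>A valid sequent with atomic succedent \<open>p\<close> that is not an axiom has a
  compound antecedent formula with head \<open>p\<close>; otherwise falsifying only \<open>p\<close> refutes it.\<close>
lemma principal_formula:
  assumes "entails \<Gamma> (Atom p)" "Atom p \<notin># \<Gamma>"
  obtains A C where "(A \<^bold>\<rightarrow> C) \<in># \<Gamma>" "head C = p"
proof -
  have "\<exists>G\<in>#\<Gamma>. head G = p"
  proof (rule ccontr)
    assume "\<not> (\<exists>G\<in>#\<Gamma>. head G = p)"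
    then have "\<forall>G\<in>#\<Gamma>. eval (\<lambda>a. a \<noteq> p) G" by (auto intro: eval_head)
    then show False using assms(1) unfolding entails_def by fastforce
  qed
  then obtain G where "G \<in># \<Gamma>" "head G = p" by blast
  with assms(2) show ?thesis using that by (cases G) auto
qed

text \<open>If the head atom \<open>p\<close> of \<open>A \<rightarrow> C\<close> occurs neither in \<open>A\<close> nor in \<open>\<Delta>\<close>, then
  \<open>\<Delta>\<close> entails \<open>A\<close>: a valuation refuting this, with \<open>p\<close> made false, would refute
  the sequent \<open>A \<rightarrow> C, \<Delta> \<Rightarrow> p\<close>.\<close>
lemma premise_entailed:
  assumes "entails (add_mset (A \<^bold>\<rightarrow> C) \<Delta>) (Atom p)" "p \<notin># atom_occs A" "p \<notin># occs \<Delta>"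
  shows "entails \<Delta> A"
  unfolding entails_def
proof (intro allI impI)
  fix v assume v: "\<forall>G\<in>#\<Delta>. eval v G"
  let ?w = "v(p := False)"
  have unchanged: "eval ?w G = eval v G" if "p \<notin># atom_occs G" for G
    using that by (intro eval_cong) auto
  have "eval ?w G" if "G \<in># \<Delta>" for G
    using unchanged[of G] v that assms(3) occs_mem by blast
  with assms(1) have "eval ?w (A \<^bold>\<rightarrow> C) \<longrightarrow> ?w p" unfolding entails_def by fastforce
  then show "eval v A" using unchanged[OF assms(2)] by (auto intro: eval_head)
qed

lemma atom_decomposition:
  assumes bin: "binary_seq \<Gamma> (Atom p)" and ent: "entails \<Gamma> (Atom p)" and "Atom p \<notin># \<Gamma>"
  obtains A C \<Delta>1 \<Delta>2 where "add_mset (A \<^bold>\<rightarrow> C) (\<Delta>1 + \<Delta>2) \<subseteq># \<Gamma>"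
    "entails \<Delta>1 A" "entails (add_mset C \<Delta>2) (Atom p)"
proof -
  obtain A C where AC: "(A \<^bold>\<rightarrow> C) \<in># \<Gamma>" "head C = p"
    using principal_formula[OF ent \<open>Atom p \<notin># \<Gamma>\<close>] .
  define \<Delta> where "\<Delta> = \<Gamma> - {#A \<^bold>\<rightarrow> C#}"
  have \<Gamma>: "\<Gamma> = add_mset (A \<^bold>\<rightarrow> C) \<Delta>" using AC(1) by (simp add: \<Delta>_def)
  have bin\<Delta>: "at_most_twice (occs \<Delta> + (atom_occs A + atom_occs C + {#p#}))"
    using bin by (simp add: binary_seq_def \<Gamma> ac_simps)
  text \<open>Both occurrences of \<open>p\<close> are used up by \<open>C\<close> and the succedent.\<close>
  have "count (occs \<Delta>) p + count (atom_occs A) p + count (atom_occs C) p + 1 \<le> 2"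
    using bin\<Delta>[unfolded at_most_twice_def, rule_format, of p] by simp
  moreover have "0 < count (atom_occs C) p" using head_in_atom_occs[of C] AC(2) by simp
  ultimately have "count (atom_occs A) p = 0" "count (occs \<Delta>) p = 0" by linarith+
  then have "p \<notin># atom_occs A" "p \<notin># occs \<Delta>" by (simp_all add: not_in_iff)
  then have "entails ({#} + \<Delta>) A" using premise_entailed ent \<Gamma> by simp
  then obtain \<Delta>1 where D1: "\<Delta>1 \<subseteq># \<Delta>" "entails ({#} + \<Delta>1) A"
    "\<And>N. N \<subset># \<Delta>1 \<Longrightarrow> \<not> entails ({#} + N) A"
    by (rule exists_minimal_submultiset[where P = "\<lambda>N. entails ({#} + N) A"]) blast
  have "entails ({#C#} + \<Delta>) (Atom p)" using ent \<Gamma> by (auto simp: entails_def)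
  then obtain \<Delta>2 where D2: "\<Delta>2 \<subseteq># \<Delta>" "entails ({#C#} + \<Delta>2) (Atom p)"
    "\<And>N. N \<subset># \<Delta>2 \<Longrightarrow> \<not> entails ({#C#} + N) (Atom p)"
    by (rule exists_minimal_submultiset[where P = "\<lambda>N. entails ({#C#} + N) (Atom p)"]) blast
  have "\<Delta>1 \<inter># \<Delta>2 = {#}"
    by (rule minimal_supports_disjoint[OF _ D1 D2]) (use bin\<Delta> in \<open>simp add: ac_simps\<close>)
  then have "\<Delta>1 + \<Delta>2 \<subseteq># \<Delta>"
    using D1(1) D2(1) by (metis subset_mset.inf.orderE union_diff_inter_eq_sup diff_zero
        subset_mset.sup_least)
  then show ?thesis
    using that[of A C \<Delta>1 \<Delta>2] D1(2) D2(2) by (simp add: \<Gamma>)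
qed

definition seq_size :: "fm multiset \<Rightarrow> fm \<Rightarrow> nat" where
  "seq_size \<Gamma> X = (\<Sum>G\<in>#\<Gamma>. size G) + size X"

lemma sum_size_mono: "\<Gamma>' \<subseteq># \<Gamma> \<Longrightarrow> (\<Sum>G\<in>#\<Gamma>'. size G) \<le> (\<Sum>G\<in>#\<Gamma>. size (G::fm))"
  by (auto simp: subset_mset.le_iff_add)

lemma decomposition_premises:
  assumes sub: "add_mset (A \<^bold>\<rightarrow> C) (\<Delta>1 + \<Delta>2) \<subseteq># \<Gamma>" and bin: "binary_seq \<Gamma> (Atom p)"
  shows "binary_seq \<Delta>1 A" "binary_seq (add_mset C \<Delta>2) (Atom p)"
    "seq_size \<Delta>1 A < seq_size \<Gamma> (Atom p)"
    "seq_size (add_mset C \<Delta>2) (Atom p) < seq_size \<Gamma> (Atom p)"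
proof -
  have occs_sub: "occs (add_mset (A \<^bold>\<rightarrow> C) (\<Delta>1 + \<Delta>2)) + {#p#} \<subseteq># occs \<Gamma> + atom_occs (Atom p)"
    using occs_mono[OF sub] by (simp add: ac_simps)
  show "binary_seq \<Delta>1 A" "binary_seq (add_mset C \<Delta>2) (Atom p)"
    using bin subset_mset.order_trans[OF _ occs_sub]
    by (rule binary_seq_sub; simp add: subseteq_mset_def)+
  show "seq_size \<Delta>1 A < seq_size \<Gamma> (Atom p)"
    "seq_size (add_mset C \<Delta>2) (Atom p) < seq_size \<Gamma> (Atom p)"
    using sum_size_mono[OF sub] by (simp_all add: seq_size_def)
qed

theorem binary_complete: "binary_seq \<Gamma> X \<Longrightarrow> entails \<Gamma> X \<Longrightarrow> CL7 \<Gamma> X"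
proof (induction "seq_size \<Gamma> X" arbitrary: \<Gamma> X rule: less_induct)
  case less
  show ?case
  proof (cases X)
    case (Imp A B)
    have "binary_seq (add_mset A \<Gamma>) B" "entails (add_mset A \<Gamma>) B"
      using less.prems Imp by (auto simp: binary_seq_def entails_def ac_simps)
    moreover have "seq_size (add_mset A \<Gamma>) B < seq_size \<Gamma> X"
      using Imp by (simp add: seq_size_def)
    ultimately show ?thesis using less.hyps Imp CL7.ImpR by blast
  next
    case (Atom p)
    show ?thesis
    proof (cases "Atom p \<in># \<Gamma>")
      case True
      then show ?thesis using Atom CL7.Ax by (metis insert_DiffM)
    next
      case False
      with less.prems Atom obtain A C \<Delta>1 \<Delta>2 where
        sub: "add_mset (A \<^bold>\<rightarrow> C) (\<Delta>1 + \<Delta>2) \<subseteq># \<Gamma>" and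
        ent: "entails \<Delta>1 A" "entails (add_mset C \<Delta>2) (Atom p)"
        by (metis atom_decomposition)
      note decomp = decomposition_premises[OF sub less.prems(1)[unfolded Atom]]
      have left: "CL7 \<Delta>1 A" using less.hyps decomp(1,3) ent(1) Atom by blast
      have right: "CL7 (add_mset C \<Delta>2) (Atom p)" using less.hyps decomp(2,4) ent(2) Atom by blast
      have "\<Gamma> = add_mset (A \<^bold>\<rightarrow> C) (\<Delta>2 + \<Delta>1) + (\<Gamma> - add_mset (A \<^bold>\<rightarrow> C) (\<Delta>1 + \<Delta>2))"
        using subset_mset.add_diff_inverse[OF sub] by (simp add: add.commute)
      then show ?thesis
        using CL7_weaken[OF CL7.ImpL[OF right left]] Atom by metis
    qed
  qed
qed

theorem theorem2p1:
  fixes H :: fm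
  shows "provable_CL7 H \<longleftrightarrow> (\<exists>F. binary F \<and> tautology F \<and> subst_instance H F)"
proof
  assume "provable_CL7 H"
  then obtain \<Gamma>' F \<sigma> where F: "CL7 \<Gamma>' F" "binary_seq \<Gamma>' F"
    "image_mset (subst \<sigma>) \<Gamma>' = {#}" "subst \<sigma> F = H"
    using derivable_generalisable unfolding provable_CL7_def binary_generalisable_def by blast
  then have "\<Gamma>' = {#}" by simp
  with F show "\<exists>F. binary F \<and> tautology F \<and> subst_instance H F"
    using CL7_sound binary_seq_empty entails_empty subst_instance_def by blast
next
  assume "\<exists>F. binary F \<and> tautology F \<and> subst_instance H F"
  then obtain F \<sigma> where "binary F" "tautology F" "H = subst \<sigma> F"
    by (auto simp: subst_instance_def)
  then have "CL7 {#} F" "H = subst \<sigma> F"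
    using binary_complete binary_seq_empty entails_empty by blast+
  then show "provable_CL7 H"
    using CL7_subst[of "{#}" F \<sigma>] by (simp add: provable_CL7_def)
qed

end
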